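(* The radical $\sqrt{\nabla}$ of a finite irreducible undirected graph $\nabla$ (loops allowed) is itself an irreducible graph.
   Context: $\nabla(x)$ is the set of vertices adjacent to $x$, $\nabla(X)=\bigcap_{x\in X}\nabla(x)$ (with $\nabla(\emptyset)=V$), and $\mathbb{L}(\nabla)=\{X\subseteq V:\nabla(\nabla(X))=X\}$ ordered by inclusion. A graph is irreducible if distinct vertices have distinct neighborhoods. An element $a$ of a lattice is (completely) meet-irreducible if $a=\bigwedge A$ for a subset $A$ implies $a\in A$; a vertex $x$ is essential if $\nabla(x)$ is meet-irreducible in $\mathbb{L}(\nabla)$. The radical $\sqrt{\nabla}$ is the induced subgraph of $\nabla$ on the set of its essential vertices (adjacency inherited from $\nabla$). *)

theory Defs
  imports Main
begin

text \<open>A graph is given by a vertex set V and an adjacency relation adj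
  (only its restriction to V matters). Undirected: adj symmetric on V; loops allowed.\<close>

definition undirected_graph :: "'a set \<Rightarrow> ('a \<Rightarrow> 'a \<Rightarrow> bool) \<Rightarrow> bool" where
  "undirected_graph V adj \<longleftrightarrow> (\<forall>x\<in>V. \<forall>y\<in>V. adj x y \<longleftrightarrow> adj y x)"

definition nbhd :: "'a set \<Rightarrow> ('a \<Rightarrow> 'a \<Rightarrow> bool) \<Rightarrow> 'a \<Rightarrow> 'a set" where
  "nbhd V adj x = {y \<in> V. adj x y}"

definition nablaS :: "'a set \<Rightarrow> ('a \<Rightarrow> 'a \<Rightarrow> bool) \<Rightarrow> 'a set \<Rightarrow> 'a set" where
  "nablaS V adj X = {y \<in> V. \<forall>x\<in>X. adj x y}"

definition closed_sets :: "'a set \<Rightarrow> ('a \<Rightarrow> 'a \<Rightarrow> bool) \<Rightarrow> 'a set set" where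
  "closed_sets V adj = {X. X \<subseteq> V \<and> nablaS V adj (nablaS V adj X) = X}"

definition irreducible_graph :: "'a set \<Rightarrow> ('a \<Rightarrow> 'a \<Rightarrow> bool) \<Rightarrow> bool" where
  "irreducible_graph V adj \<longleftrightarrow>
     (\<forall>x\<in>V. \<forall>y\<in>V. x \<noteq> y \<longrightarrow> nbhd V adj x \<noteq> nbhd V adj y)"

definition is_meet_in :: "'b set set \<Rightarrow> 'b set set \<Rightarrow> 'b set \<Rightarrow> bool" where
  "is_meet_in L A a \<longleftrightarrow> a \<in> L \<and> (\<forall>b\<in>A. a \<subseteq> b)
     \<and> (\<forall>c\<in>L. (\<forall>b\<in>A. c \<subseteq> b) \<longrightarrow> c \<subseteq> a)"

text \<open>Completely meet-irreducible element of the lattice L.\<close>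
definition meet_irreducible_in :: "'b set set \<Rightarrow> 'b set \<Rightarrow> bool" where
  "meet_irreducible_in L a \<longleftrightarrow> a \<in> L \<and>
     (\<forall>A. A \<subseteq> L \<longrightarrow> is_meet_in L A a \<longrightarrow> a \<in> A)"

definition essential :: "'a set \<Rightarrow> ('a \<Rightarrow> 'a \<Rightarrow> bool) \<Rightarrow> 'a \<Rightarrow> bool" where
  "essential V adj x \<longleftrightarrow> x \<in> V \<and> meet_irreducible_in (closed_sets V adj) (nbhd V adj x)"

text \<open>Radical: induced subgraph on the essential vertices (vertex set; adjacency inherited).\<close>
definition radical_vertices :: "'a set \<Rightarrow> ('a \<Rightarrow> 'a \<Rightarrow> bool) \<Rightarrow> 'a set" where
  "radical_vertices V adj = {x \<in> V. essential V adj x}"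

end

theory Submission
  imports Defs
begin

text \<open>The map \<open>X \<mapsto> \<nabla>(X)\<close> is an antitone Galois connection of the power set of V with
  itself, so the meet-irreducible closed sets are exactly the neighbourhoods that cannot be
  written as intersections of other neighbourhoods. Let x \<noteq> y be essential vertices; by
  irreducibility some z is adjacent to x but not to y, say. In a finite graph the closed set
  \<open>\<nabla>(z)\<close> extends to a closed set M that is maximal among the closed sets not containing y.
  Such an M is meet-irreducible (every closed proper superset contains y), hence
  \<open>M = \<nabla>(w)\<close> for an essential vertex w, and w is adjacent to x but not to y.\<close>

lemma nablaS_subset_V: "nablaS V adj X \<subseteq> V"
  unfolding nablaS_def by blast

lemma nablaS_antimono: "X \<subseteq> Y \<Longrightarrow> nablaS V adj Y \<subseteq> nablaS V adj X"
  unfolding nablaS_def by blast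

lemma subset_nablaS_nablaS:
  assumes "undirected_graph V adj" "X \<subseteq> V"
  shows "X \<subseteq> nablaS V adj (nablaS V adj X)"
  using assms unfolding nablaS_def undirected_graph_def by blast

lemma nablaS_nablaS_nablaS:
  assumes "undirected_graph V adj" "X \<subseteq> V"
  shows "nablaS V adj (nablaS V adj (nablaS V adj X)) = nablaS V adj X"
  using nablaS_antimono[OF subset_nablaS_nablaS[OF assms]]
    subset_nablaS_nablaS[OF assms(1) nablaS_subset_V]
  by blast

lemma nablaS_nablaS_in_closed_sets:
  assumes "undirected_graph V adj" "X \<subseteq> V"
  shows "nablaS V adj (nablaS V adj X) \<in> closed_sets V adj"
  unfolding closed_sets_def
  using nablaS_nablaS_nablaS[OF assms(1) nablaS_subset_V] nablaS_subset_V[of V adj] by simp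

lemma nbhd_eq_nablaS_singleton: "nbhd V adj x = nablaS V adj {x}"
  unfolding nbhd_def nablaS_def by auto

lemma nbhd_in_closed_sets:
  assumes "undirected_graph V adj" "x \<in> V"
  shows "nbhd V adj x \<in> closed_sets V adj"
  unfolding closed_sets_def nbhd_eq_nablaS_singleton
  using nablaS_nablaS_nablaS[OF assms(1), of "{x}"] assms(2) nablaS_subset_V[of V adj] by auto

lemma closed_set_is_meet_of_nbhds:
  assumes undir: "undirected_graph V adj" and M: "M \<in> closed_sets V adj"
  shows "is_meet_in (closed_sets V adj) (nbhd V adj ` nablaS V adj M) M"
  unfolding is_meet_in_def
proof (intro conjI ballI impI)
  have MV: "M \<subseteq> V" and M_eq: "nablaS V adj (nablaS V adj M) = M"
    using M unfolding closed_sets_def by auto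
  show "M \<in> closed_sets V adj" by (fact M)
  show "M \<subseteq> b" if b: "b \<in> nbhd V adj ` nablaS V adj M" for b
  proof -
    obtain w where w: "w \<in> nablaS V adj M" "b = nbhd V adj w" using b by blast
    have "adj w m" if "m \<in> M" for m
      using w(1) that MV undir unfolding nablaS_def undirected_graph_def by auto
    then show ?thesis using w(2) MV unfolding nbhd_def by auto
  qed
  show "c \<subseteq> M" if c: "c \<in> closed_sets V adj" and
    lower: "\<forall>b \<in> nbhd V adj ` nablaS V adj M. c \<subseteq> b" for c
  proof -
    have "adj w t" if "t \<in> c" "w \<in> nablaS V adj M" for t w
    proof -
      have "c \<subseteq> nbhd V adj w" using lower that(2) by simp
      then show ?thesis using that(1) unfolding nbhd_def by blast
    qed
    moreover have "c \<subseteq> V" using c unfolding closed_sets_def by blast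
    ultimately have "c \<subseteq> nablaS V adj (nablaS V adj M)"
      unfolding nablaS_def by blast
    then show ?thesis using M_eq by simp
  qed
qed

lemma meet_irreducible_closed_set_is_nbhd:
  assumes "undirected_graph V adj" "meet_irreducible_in (closed_sets V adj) M"
  obtains w where "w \<in> V" "M = nbhd V adj w"
proof -
  have "M \<in> closed_sets V adj"
    using assms(2) unfolding meet_irreducible_in_def by blast
  moreover have "nbhd V adj ` nablaS V adj M \<subseteq> closed_sets V adj"
    using nbhd_in_closed_sets[OF assms(1)] nablaS_subset_V[of V adj] by blast
  ultimately have "M \<in> nbhd V adj ` nablaS V adj M"
    using closed_set_is_meet_of_nbhds[OF assms(1)] assms(2)
    unfolding meet_irreducible_in_def by blast
  then show ?thesis using that nablaS_subset_V[of V adj] by blast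
qed

text \<open>A meet of closed sets all strictly above M contains y, because y lies in the closure
  of \<open>M \<union> {y}\<close>, which is below each of them.\<close>

lemma maximal_closed_set_avoiding_is_meet_irreducible:
  assumes undir: "undirected_graph V adj"
    and M: "M \<in> closed_sets V adj" and y: "y \<in> V" "y \<notin> M"
    and maximal: "\<And>b. b \<in> closed_sets V adj \<Longrightarrow> M \<subseteq> b \<Longrightarrow> y \<notin> b \<Longrightarrow> b = M"
  shows "meet_irreducible_in (closed_sets V adj) M"
  unfolding meet_irreducible_in_def
proof (intro conjI allI impI)
  show "M \<in> closed_sets V adj" by (fact M)
  fix A assume A: "A \<subseteq> closed_sets V adj" and meet: "is_meet_in (closed_sets V adj) A M"
  show "M \<in> A"
  proof (rule ccontr)
    assume "M \<notin> A"
    define c where "c = nablaS V adj (nablaS V adj (insert y M))"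
    have yM_V: "insert y M \<subseteq> V"
      using M y unfolding closed_sets_def by auto
    have "c \<subseteq> b" if "b \<in> A" for b
    proof -
      have b: "b \<in> closed_sets V adj" "M \<subseteq> b"
        using that A meet unfolding is_meet_in_def by auto
      with maximal \<open>M \<notin> A\<close> that have "insert y M \<subseteq> b" by blast
      then have "c \<subseteq> nablaS V adj (nablaS V adj b)"
        unfolding c_def by (intro nablaS_antimono)
      then show ?thesis using b unfolding closed_sets_def by auto
    qed
    then have "c \<subseteq> M"
      using meet nablaS_nablaS_in_closed_sets[OF undir yM_V]
      unfolding is_meet_in_def c_def by blast
    moreover have "y \<in> c"
      using subset_nablaS_nablaS[OF undir yM_V] unfolding c_def by blast
    ultimately show False using y by blast
  qed
qed

lemma exists_maximal_closed_superset_avoiding: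
  assumes "finite V" "X \<in> closed_sets V adj" "y \<notin> X"
  obtains M where "M \<in> closed_sets V adj" "X \<subseteq> M" "y \<notin> M"
    "\<And>b. b \<in> closed_sets V adj \<Longrightarrow> M \<subseteq> b \<Longrightarrow> y \<notin> b \<Longrightarrow> b = M"
proof -
  let ?C = "{b \<in> closed_sets V adj. X \<subseteq> b \<and> y \<notin> b}"
  have "?C \<subseteq> Pow V" by (auto simp: closed_sets_def)
  then have "finite ?C" using assms(1) by (simp add: finite_subset)
  moreover have "X \<in> ?C" using assms(2,3) by blast
  ultimately obtain M where "M \<in> ?C" "\<forall>b \<in> ?C. M \<subseteq> b \<longrightarrow> M = b"
    using finite_has_maximal[of ?C] by blast
  then show ?thesis by (intro that[of M]) auto
qed

lemma essential_vertex_separating: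
  assumes fin: "finite V" and undir: "undirected_graph V adj"
    and V: "x \<in> V" "y \<in> V" "z \<in> V" and "adj x z" "\<not> adj y z"
  obtains w where "w \<in> radical_vertices V adj" "adj x w" "\<not> adj y w"
proof -
  have "y \<notin> nbhd V adj z" "x \<in> nbhd V adj z"
    using assms undir unfolding nbhd_def undirected_graph_def by auto
  then obtain M where M: "M \<in> closed_sets V adj" "nbhd V adj z \<subseteq> M" "y \<notin> M"
    and maximal: "\<And>b. b \<in> closed_sets V adj \<Longrightarrow> M \<subseteq> b \<Longrightarrow> y \<notin> b \<Longrightarrow> b = M"
    using exists_maximal_closed_superset_avoiding[OF fin nbhd_in_closed_sets[OF undir V(3)]]
    by metis
  have irred: "meet_irreducible_in (closed_sets V adj) M"
    using maximal_closed_set_avoiding_is_meet_irreducible[OF undir M(1) V(2) M(3) maximal] .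
  then obtain w where w: "w \<in> V" "M = nbhd V adj w"
    using meet_irreducible_closed_set_is_nbhd[OF undir] by blast
  have "w \<in> radical_vertices V adj"
    using w irred unfolding radical_vertices_def essential_def by simp
  moreover have "adj x w" "\<not> adj y w"
    using \<open>x \<in> nbhd V adj z\<close> M(2,3) w V undir unfolding nbhd_def undirected_graph_def by auto
  ultimately show ?thesis using that by blast
qed

theorem mainTheorem16:
  fixes V :: "'a set" and adj :: "'a \<Rightarrow> 'a \<Rightarrow> bool"
  assumes "finite V"
    and "undirected_graph V adj"
    and "irreducible_graph V adj"
  shows "irreducible_graph (radical_vertices V adj) adj"
  unfolding irreducible_graph_def
proof (intro ballI impI)
  fix x y assume "x \<in> radical_vertices V adj" "y \<in> radical_vertices V adj" "x \<noteq> y"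
  then have V: "x \<in> V" "y \<in> V" unfolding radical_vertices_def by auto
  with assms(3) \<open>x \<noteq> y\<close> obtain z where "z \<in> V" "adj x z \<noteq> adj y z"
    unfolding irreducible_graph_def nbhd_def by blast
  then consider "adj x z" "\<not> adj y z" | "adj y z" "\<not> adj x z" by blast
  then show "nbhd (radical_vertices V adj) adj x \<noteq> nbhd (radical_vertices V adj) adj y"
  proof cases
    case 1
    with essential_vertex_separating[OF assms(1,2) V \<open>z \<in> V\<close>] show ?thesis
      unfolding nbhd_def by blast
  next
    case 2
    with essential_vertex_separating[OF assms(1,2) V(2,1) \<open>z \<in> V\<close>] show ?thesis
      unfolding nbhd_def by blast
  qed
qed

end
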